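(* Let $\phi=(\phi_g,A_g,A)_{g\in G}$ be a partial action of a group $G$ on a ring $A$ and let $A\rtimes_\phi G$ be the partial skew group ring. Then $A\rtimes_\phi G$ is graded von Neumann regular if and only if $A_g$ is von Neumann regular for every $g\in G$.
   Context: A partial action of a group $G$ (identity $\varepsilon$) on a ring $A$ consists of ideals $A_g\subseteq A$ and ring isomorphisms $\phi_g:A_{g^{-1}}\to A_g$ such that (i) $A_\varepsilon=A$, $\phi_\varepsilon=\operatorname{id}$; (ii) $\phi_g(A_{g^{-1}}\cap A_h)=A_g\cap A_{gh}$; (iii) $\phi_g(\phi_h(x))=\phi_{gh}(x)$ for $x\in A_{h^{-1}}\cap A_{h^{-1}g^{-1}}$. The partial skew group ring $A\rtimes_\phi G$ is the set of finite formal sums $\sum_g a_g\delta_g$ with $a_g\in A_g$, with multiplication extending $(a_g\delta_g)(b_h\delta_h)=\phi_g(\phi_{g^{-1}}(a_g)b_h)\delta_{gh}$; it is $G$-graded with $(A\rtimes_\phi G)_g=A_g\delta_g$. A (not necessarily unital) ring $B$ is von Neumann regular if for every $x\in B$ there is $y\in B$ with $xyx=x$; a $G$-graded ring is graded von Neumann regular if this holds for every homogeneous $x$. *)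

theory Defs
  imports Main
begin

text \<open>Rings are non-unital associative rings (class ring); the group G is a type of
class group_add written additively: identity 0, product g + h, inverse - g.\<close>

definition is_ideal :: "'a::ring set \<Rightarrow> bool" where
  "is_ideal I \<longleftrightarrow> 0 \<in> I \<and> (\<forall>x\<in>I. \<forall>y\<in>I. x + y \<in> I) \<and> (\<forall>x\<in>I. - x \<in> I)
     \<and> (\<forall>x\<in>I. \<forall>r. r * x \<in> I \<and> x * r \<in> I)"

definition partial_action :: "('g::group_add \<Rightarrow> 'a::ring set) \<Rightarrow> ('g \<Rightarrow> 'a \<Rightarrow> 'a) \<Rightarrow> bool" where
  "partial_action A \<phi> \<longleftrightarrow>
     (\<forall>g. is_ideal (A g))
   \<and> (\<forall>g. bij_betw (\<phi> g) (A (- g)) (A g))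
   \<and> (\<forall>g. \<forall>x\<in>A (- g). \<forall>y\<in>A (- g). \<phi> g (x + y) = \<phi> g x + \<phi> g y \<and> \<phi> g (x * y) = \<phi> g x * \<phi> g y)
   \<and> A 0 = UNIV \<and> (\<forall>x. \<phi> 0 x = x)
   \<and> (\<forall>g h. \<phi> g ` (A (- g) \<inter> A h) = A g \<inter> A (g + h))
   \<and> (\<forall>g h. \<forall>x \<in> A (- h) \<inter> A (- h + - g). \<phi> g (\<phi> h x) = \<phi> (g + h) x)"

text \<open>Elements of the partial skew group ring: finitely supported functions f with f g in A g
(f represents the formal sum of f g delta_g).\<close>
definition skew_carrier :: "('g \<Rightarrow> 'a::ring set) \<Rightarrow> ('g \<Rightarrow> 'a) set" where
  "skew_carrier A = {f. finite {g. f g \<noteq> 0} \<and> (\<forall>g. f g \<in> A g)}"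

text \<open>Multiplication extending (a delta_g)(b delta_h) = phi_g(phi_{g^-1}(a) b) delta_{gh}.\<close>
definition skew_mult :: "('g::group_add \<Rightarrow> 'a \<Rightarrow> 'a::ring) \<Rightarrow> ('g \<Rightarrow> 'a) \<Rightarrow> ('g \<Rightarrow> 'a) \<Rightarrow> ('g \<Rightarrow> 'a)" where
  "skew_mult \<phi> f h = (\<lambda>k. \<Sum>g\<in>{g. f g \<noteq> 0}. \<phi> g (\<phi> (- g) (f g) * h (- g + k)))"

definition delta :: "'g \<Rightarrow> 'a::zero \<Rightarrow> ('g \<Rightarrow> 'a)" where
  "delta g a = (\<lambda>k. if k = g then a else 0)"

definition graded_vnr :: "('g::group_add \<Rightarrow> 'a::ring set) \<Rightarrow> ('g \<Rightarrow> 'a \<Rightarrow> 'a) \<Rightarrow> bool" where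
  "graded_vnr A \<phi> \<longleftrightarrow> (\<forall>g. \<forall>a\<in>A g. \<exists>y\<in>skew_carrier A.
      skew_mult \<phi> (skew_mult \<phi> (delta g a) y) (delta g a) = delta g a)"

definition vnr_subring :: "'a::ring set \<Rightarrow> bool" where
  "vnr_subring S \<longleftrightarrow> (\<forall>x\<in>S. \<exists>y\<in>S. x * y * x = x)"

end

theory Submission
  imports Defs
begin

text \<open>If a b a = a with b in A_g, then (a \<delta>_g)(\<phi>_{-g}(b) \<delta>_{-g})(a \<delta>_g) = (a b a) \<delta>_g, because
  \<phi>_g is multiplicative on A_{-g} with inverse \<phi>_{-g}. Conversely, if (a \<delta>_g) y (a \<delta>_g) = a \<delta>_g
  for an arbitrary y, only the component y_{-g} contributes to degree g, and it yields
  a c a = a for c = \<phi>_g(y_{-g}) in A_g.\<close>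

lemma skew_mult_delta_left:
  assumes "\<And>g. \<phi> g 0 = 0"
  shows "skew_mult \<phi> (delta g a) f = (\<lambda>k. \<phi> g (\<phi> (- g) a * f (- g + k)))"
proof (cases "a = 0")
  case True
  then show ?thesis by (simp add: skew_mult_def delta_def assms)
next
  case False
  then have "{g'. delta g a g' \<noteq> 0} = {g}" by (auto simp: delta_def)
  then show ?thesis by (simp add: skew_mult_def delta_def)
qed

lemma skew_mult_delta_delta:
  assumes "\<And>g. \<phi> g 0 = 0"
  shows "skew_mult \<phi> (delta g a) (delta h b) = delta (g + h) (\<phi> g (\<phi> (- g) a * b))"
proof -
  have "- g + k = h \<longleftrightarrow> k = g + h" for k
    by (auto simp: add.assoc[symmetric])
  then show ?thesis
    unfolding skew_mult_delta_left[of \<phi>, OF assms] by (auto simp: delta_def assms)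
qed

lemma skew_mult_delta_right_apply:
  assumes zero: "\<And>g. \<phi> g 0 = 0" and fin: "finite {g. f g \<noteq> 0}"
  shows "skew_mult \<phi> f (delta h b) k = \<phi> (k - h) (\<phi> (- (k - h)) (f (k - h)) * b)"
proof -
  define contribution where "contribution g = \<phi> g (\<phi> (- g) (f g) * b)" for g
  have "- g + k = h \<longleftrightarrow> g = k - h" for g
    by (metis add_minus_cancel minus_add_cancel diff_add_cancel diff_minus_eq_add)
  then have "skew_mult \<phi> f (delta h b) k
      = (\<Sum>g\<in>{g. f g \<noteq> 0}. if g = k - h then contribution g else 0)"
    unfolding skew_mult_def delta_def contribution_def by (intro sum.cong) (auto simp: zero)
  also have "\<dots> = contribution (k - h)"
    using fin by (simp add: sum.delta contribution_def zero)
  finally show ?thesis unfolding contribution_def .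
qed

lemma delta_in_skew_carrier:
  assumes "\<And>k. 0 \<in> A k" "a \<in> A g"
  shows "delta g a \<in> skew_carrier A"
proof -
  have "{k. delta g a k \<noteq> 0} \<subseteq> {g}" by (auto simp: delta_def)
  then show ?thesis
    using assms finite_subset by (auto simp: skew_carrier_def delta_def)
qed

context
  fixes A :: "'g::group_add \<Rightarrow> 'a::ring set" and \<phi> :: "'g \<Rightarrow> 'a \<Rightarrow> 'a"
  assumes pa: "partial_action A \<phi>"
begin

lemma partial_action_zero_mem: "0 \<in> A g"
  using pa by (simp add: partial_action_def is_ideal_def)

lemma partial_action_map_mem: "x \<in> A (- g) \<Longrightarrow> \<phi> g x \<in> A g"
  using pa unfolding partial_action_def by (meson bij_betwE)

lemma partial_action_map_add:
  "x \<in> A (- g) \<Longrightarrow> y \<in> A (- g) \<Longrightarrow> \<phi> g (x + y) = \<phi> g x + \<phi> g y"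
  using pa by (simp add: partial_action_def)

lemma partial_action_map_mult:
  "x \<in> A (- g) \<Longrightarrow> y \<in> A (- g) \<Longrightarrow> \<phi> g (x * y) = \<phi> g x * \<phi> g y"
  using pa by (simp add: partial_action_def)

lemma partial_action_map_neutral: "\<phi> 0 x = x"
  using pa by (simp add: partial_action_def)

lemma partial_action_map_comp:
  "x \<in> A (- h) \<Longrightarrow> x \<in> A (- h + - g) \<Longrightarrow> \<phi> g (\<phi> h x) = \<phi> (g + h) x"
  using pa unfolding partial_action_def by (elim conjE) (simp del: minus_add_distrib)

lemma partial_action_map_zero: "\<phi> g 0 = 0"
  using partial_action_map_add[OF partial_action_zero_mem partial_action_zero_mem, of g] by simp

lemma partial_action_map_inverse: "x \<in> A g \<Longrightarrow> \<phi> g (\<phi> (- g) x) = x"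
  using partial_action_map_comp[of x "- g" g] pa
  by (simp add: partial_action_def partial_action_map_neutral)

lemma partial_action_map_inverse_mult:
  assumes "x \<in> A g" "y \<in> A g"
  shows "\<phi> g (\<phi> (- g) x * \<phi> (- g) y) = x * y"
  using assms
  by (simp add: partial_action_map_mult partial_action_map_mem partial_action_map_inverse)

lemma regular_of_homogeneous_regular:
  assumes a: "a \<in> A g" and y: "y \<in> skew_carrier A"
    and reg: "skew_mult \<phi> (skew_mult \<phi> (delta g a) y) (delta g a) = delta g a"
  shows "\<exists>c\<in>A g. a * c * a = a"
proof -
  define X where "X = skew_mult \<phi> (delta g a) y"
  have X: "X = (\<lambda>k. \<phi> g (\<phi> (- g) a * y (- g + k)))"
    unfolding X_def by (rule skew_mult_delta_left[of \<phi>, OF partial_action_map_zero])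
  have "{k. X k \<noteq> 0} \<subseteq> (+) g ` {j. y j \<noteq> 0}"
  proof
    fix k assume "k \<in> {k. X k \<noteq> 0}"
    then have "y (- g + k) \<noteq> 0" by (auto simp: X partial_action_map_zero)
    then show "k \<in> (+) g ` {j. y j \<noteq> 0}" by (force simp: add.assoc[symmetric])
  qed
  moreover have "finite {j. y j \<noteq> 0}" using y by (simp add: skew_carrier_def)
  ultimately have fin: "finite {k. X k \<noteq> 0}" by (meson finite_imageI finite_subset)
  have yg: "y (- g) \<in> A (- g)" using y by (simp add: skew_carrier_def)
  define c where "c = \<phi> g (y (- g))"
  have c: "c \<in> A g" unfolding c_def using yg by (rule partial_action_map_mem)
  have "y (- g) = \<phi> (- g) c"
    using partial_action_map_inverse[OF yg] by (simp add: c_def)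
  then have X0: "X 0 = a * c"
    using partial_action_map_inverse_mult[OF a c] by (simp add: X)
  have "a = skew_mult \<phi> X (delta g a) g"
    using fun_cong[OF reg, of g] by (simp add: X_def delta_def)
  also have "\<dots> = X 0 * a"
    by (simp add: skew_mult_delta_right_apply[of \<phi>, OF partial_action_map_zero fin]
        partial_action_map_neutral)
  finally show ?thesis using c X0 by (metis mult.assoc)
qed

lemma homogeneous_regular_of_regular:
  assumes a: "a \<in> A g" and b: "b \<in> A g" and aba: "a * b * a = a"
  shows "skew_mult \<phi> (skew_mult \<phi> (delta g a) (delta (- g) (\<phi> (- g) b))) (delta g a)
    = delta g a"
proof -
  have "skew_mult \<phi> (delta g a) (delta (- g) (\<phi> (- g) b)) = delta 0 (a * b)"
    using partial_action_map_inverse_mult[OF a b]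
    by (simp add: skew_mult_delta_delta[of \<phi>, OF partial_action_map_zero])
  then show ?thesis
    using aba by (simp add: skew_mult_delta_delta[of \<phi>, OF partial_action_map_zero]
        partial_action_map_neutral)
qed

end

theorem mainTheorem4:
  fixes A :: "'g::group_add \<Rightarrow> 'a::ring set" and \<phi> :: "'g \<Rightarrow> 'a \<Rightarrow> 'a"
  assumes "partial_action A \<phi>"
  shows "graded_vnr A \<phi> \<longleftrightarrow> (\<forall>g. vnr_subring (A g))"
proof
  assume "graded_vnr A \<phi>"
  then show "\<forall>g. vnr_subring (A g)"
    unfolding graded_vnr_def vnr_subring_def
    using regular_of_homogeneous_regular[OF assms] by meson
next
  assume regular: "\<forall>g. vnr_subring (A g)"
  show "graded_vnr A \<phi>"
    unfolding graded_vnr_def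
  proof (intro allI ballI)
    fix g a assume a: "a \<in> A g"
    then obtain b where b: "b \<in> A g" and "a * b * a = a"
      using regular by (auto simp: vnr_subring_def)
    then have "skew_mult \<phi> (skew_mult \<phi> (delta g a) (delta (- g) (\<phi> (- g) b))) (delta g a)
        = delta g a"
      using homogeneous_regular_of_regular[OF assms a] by blast
    moreover have "delta (- g) (\<phi> (- g) b) \<in> skew_carrier A"
      using b by (simp add: delta_in_skew_carrier partial_action_zero_mem[OF assms]
          partial_action_map_mem[OF assms])
    ultimately show "\<exists>y\<in>skew_carrier A. skew_mult \<phi> (skew_mult \<phi> (delta g a) y) (delta g a)
        = delta g a"
      by blast
  qed
qed

end
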